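(* The natural map $\iota:\mathrm{Aut}(W_3)\to\mathrm{Aut}(\ker\epsilon)\cong\mathrm{Aut}(F_2)$ is an isomorphism.
   Context: $W_3=\langle s_1,s_2,s_3\mid s_1^2,s_2^2,s_3^2\rangle$. Let $\epsilon:W_3\to\{-1,1\}$ be the homomorphism sending each $s_i$ to $-1$. Its kernel is a characteristic subgroup of $W_3$, free of rank $2$ with basis $x_1=s_1s_2$, $x_2=s_2s_3$; $\iota$ sends an automorphism of $W_3$ to its restriction to $\ker\epsilon$, and $\ker\epsilon$ is identified with the free group $F_2$ via this basis. *)

theory Defs
  imports "HOL-Algebra.Bij"
begin

text \<open>The Coxeter group W_3 = <s1,s2,s3 | s1^2, s2^2, s3^2>, the free product of three
copies of Z/2, realised by its normal forms: words in the generators with no two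
consecutive equal letters; multiplication is concatenation followed by free cancellation
of adjacent equal letters.\<close>

datatype gen = S1 | S2 | S3

fun push :: "gen \<Rightarrow> gen list \<Rightarrow> gen list" where
  "push a [] = [a]"
| "push a (b # w) = (if a = b then w else a # b # w)"

fun reduced :: "gen list \<Rightarrow> bool" where
  "reduced [] = True"
| "reduced [a] = True"
| "reduced (a # b # w) = (a \<noteq> b \<and> reduced (b # w))"

definition W3 :: "gen list monoid" where
  "W3 = \<lparr>carrier = {w. reduced w}, mult = (\<lambda>u v. foldr push u v), one = []\<rparr>"

definition s :: "gen \<Rightarrow> gen list" where "s a = [a]"

definition eps :: "gen list \<Rightarrow> int" where "eps w = (-1) ^ length w"

definition ker_eps :: "gen list set" where
  "ker_eps = {w \<in> carrier W3. eps w = 1}"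

text \<open>The natural map iota: restriction of an automorphism to ker epsilon
(as an extensional function, matching the convention of AutoGroup).\<close>
definition iota :: "(gen list \<Rightarrow> gen list) \<Rightarrow> (gen list \<Rightarrow> gen list)" where
  "iota \<phi> = restrict \<phi> ker_eps"

end

theory Submission
  imports Defs
begin

text \<open>An automorphism of W_3 sends each s_i to a nontrivial involution, and involutions in
  W_3 have odd length; so automorphisms preserve the parity of length and restrict to
  ker \<epsilon>. Two automorphisms agreeing on ker \<epsilon> differ by an element inverted by every
  generator, and only the identity is, so \<iota> is injective.

  Conjugation by s_2 inverts both x_1 and x_2. Hence an automorphism \<alpha> of ker \<epsilon> extends to
  W_3, sending s_2 to t, as soon as some involution t inverts both \<alpha> x_1 and \<alpha> x_2. Such a t
  is found by Nielsen reduction of the generating pair (\<alpha> x_1, \<alpha> x_2): elementary moves preserve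
  both generation of ker \<epsilon> and the existence of a common inverting involution, and a
  Nielsen-reduced generating pair consists of two words of length two, which share a letter s_e
  inverting both.\<close>

section \<open>Reduced words and the group structure\<close>

lemma reduced_ConsD: "reduced (a # w) \<Longrightarrow> reduced w"
  by (cases w) auto

lemma reduced_Cons_iff: "reduced (a # w) \<longleftrightarrow> reduced w \<and> (w = [] \<or> hd w \<noteq> a)"
  by (cases w) auto

lemma reduced_snoc: "reduced (w @ [a]) \<longleftrightarrow> reduced w \<and> (w = [] \<or> last w \<noteq> a)"
  by (induction w rule: reduced.induct) auto

lemma reduced_rev: "reduced w \<Longrightarrow> reduced (rev w)"
  by (induction w) (auto simp: reduced_Cons_iff reduced_snoc last_rev hd_rev)

lemma reduced_iff_nth: "reduced w \<longleftrightarrow> (\<forall>i. Suc i < length w \<longrightarrow> w ! i \<noteq> w ! Suc i)"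
proof (induction w rule: reduced.induct)
  case (3 a b w)
  have "(\<forall>i. P i) \<longleftrightarrow> P 0 \<and> (\<forall>i. P (Suc i))" for P :: "nat \<Rightarrow> bool"
    by (metis not0_implies_Suc)
  from this[of "\<lambda>i. Suc i < length (a # b # w) \<longrightarrow> (a # b # w) ! i \<noteq> (a # b # w) ! Suc i"]
  show ?case by (simp add: 3)
qed auto

lemma reduced_push: "reduced w \<Longrightarrow> reduced (push a w)"
  by (cases w) (auto simp: reduced_Cons_iff)

lemma push_push: "reduced w \<Longrightarrow> push a (push a w) = w"
  by (cases w; cases "tl w") (auto simp: reduced_Cons_iff)

lemma reduced_foldr_push: "reduced v \<Longrightarrow> reduced (foldr push u v)"
  by (induction u) (auto simp: reduced_push)

lemma foldr_push_push: "reduced x \<Longrightarrow> foldr push (push a r) x = push a (foldr push r x)"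
  by (cases r) (auto simp: push_push reduced_foldr_push)

lemma foldr_push_assoc:
  "reduced x \<Longrightarrow> foldr push (foldr push u v) x = foldr push u (foldr push v x)"
  by (induction u) (auto simp: foldr_push_push reduced_foldr_push)

lemma foldr_push_rev_self: "reduced w \<Longrightarrow> foldr push (rev w) w = []"
  by (induction w) (auto dest: reduced_ConsD)

lemma foldr_push_eq_append: "reduced (u @ v) \<Longrightarrow> foldr push u v = u @ v"
proof (induction u)
  case (Cons a u)
  then have "reduced (u @ v)" by (auto dest: reduced_ConsD)
  with Cons show ?case by (cases "u @ v") (auto simp: reduced_Cons_iff)
qed simp

lemma foldr_push_Nil: "reduced u \<Longrightarrow> foldr push u [] = u"
  using foldr_push_eq_append[of u "[]"] by simp

lemma carrier_W3 [simp]: "carrier W3 = {w. reduced w}"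
  and mult_W3: "u \<otimes>\<^bsub>W3\<^esub> v = foldr push u v"
  and one_W3 [simp]: "\<one>\<^bsub>W3\<^esub> = []"
  by (simp_all add: W3_def)

lemma group_W3: "group W3"
  by (rule groupI)
    (auto simp: mult_W3 reduced_foldr_push foldr_push_assoc
      intro: reduced_rev foldr_push_rev_self)

interpretation W3: group W3
  by (rule group_W3)

abbreviation W3_mult (infixl "\<cdot>" 70) where "u \<cdot> v \<equiv> u \<otimes>\<^bsub>W3\<^esub> v"

lemma reduced_mult [simp]: "reduced u \<Longrightarrow> reduced v \<Longrightarrow> reduced (u \<cdot> v)"
  by (simp add: mult_W3 reduced_foldr_push)

lemma Nil_mult [simp]: "[] \<cdot> x = x"
  and mult_Nil [simp]: "reduced x \<Longrightarrow> x \<cdot> [] = x"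
  by (simp_all add: mult_W3 foldr_push_Nil)

lemma generator_mult_self [simp]: "[a] \<cdot> [a] = []"
  and generator_mult_generator_mult [simp]: "reduced x \<Longrightarrow> [a] \<cdot> ([a] \<cdot> x) = x"
  by (simp_all add: mult_W3 push_push)

lemma inv_W3: "reduced w \<Longrightarrow> inv\<^bsub>W3\<^esub> w = rev w"
  by (rule W3.inv_equality) (auto simp: mult_W3 foldr_push_rev_self reduced_rev)

lemma reduced_inv [simp]: "reduced w \<Longrightarrow> reduced (inv\<^bsub>W3\<^esub> w)"
  by (simp add: inv_W3 reduced_rev)

lemma inv_mult_cancel_left [simp]: "reduced a \<Longrightarrow> reduced x \<Longrightarrow> inv\<^bsub>W3\<^esub> a \<cdot> (a \<cdot> x) = x"
  and mult_inv_cancel_left [simp]: "reduced a \<Longrightarrow> reduced x \<Longrightarrow> a \<cdot> (inv\<^bsub>W3\<^esub> a \<cdot> x) = x"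
  by (simp_all add: W3.m_assoc[symmetric])

lemma inv_generator [simp]: "inv\<^bsub>W3\<^esub> [a] = [a]"
  by (simp add: inv_W3)

lemma even_length_push: "even (length (push a w)) \<longleftrightarrow> odd (length w)"
  by (cases w) auto

lemma even_length_foldr_push:
  "even (length (foldr push u v)) \<longleftrightarrow> even (length u + length v)"
  by (induction u) (simp_all add: even_length_push)

lemma even_length_mult:
  "even (length (u \<cdot> v)) \<longleftrightarrow> (even (length u) \<longleftrightarrow> even (length v))"
  by (simp add: mult_W3 even_length_foldr_push)

lemma ker_eps_iff: "k \<in> ker_eps \<longleftrightarrow> reduced k \<and> even (length k)"
  by (simp add: ker_eps_def eps_def minus_one_power_iff)

lemma subgroup_ker_eps: "subgroup ker_eps W3"
  by (rule subgroup.intro)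
    (auto simp: ker_eps_iff mult_W3 reduced_foldr_push even_length_foldr_push inv_W3 reduced_rev)

fun lcp :: "gen list \<Rightarrow> gen list \<Rightarrow> nat" where
  "lcp (a # x) (b # y) = (if a = b then Suc (lcp x y) else 0)"
| "lcp _ _ = 0"

lemma lcp_le: "lcp x y \<le> length x" "lcp x y \<le> length y"
  by (induction x y rule: lcp.induct) auto

lemma take_lcp: "take (lcp x y) x = take (lcp x y) y"
  by (induction x y rule: lcp.induct) auto

lemma lcp_greatest: "k \<le> length x \<Longrightarrow> k \<le> length y \<Longrightarrow> take k x = take k y \<Longrightarrow> k \<le> lcp x y"
proof (induction x y arbitrary: k rule: lcp.induct)
  case (1 a x b y)
  then show ?case by (cases k) auto
qed auto

lemma nth_lcp_neq: "lcp x y < length x \<Longrightarrow> lcp x y < length y \<Longrightarrow> x ! lcp x y \<noteq> y ! lcp x y"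
  by (induction x y rule: lcp.induct) auto

lemma lcp_eq_if_take_eq:
  assumes "take n y = take n y'" "n \<le> length y" "n \<le> length y'" "lcp x y < n"
  shows "lcp x y' = lcp x y"
proof -
  let ?l = "lcp x y"
  have "take ?l x = take ?l y" by (rule take_lcp)
  also have "\<dots> = take ?l y'" using assms(1,4) by (metis min.strict_order_iff take_take)
  finally have "?l \<le> lcp x y'" using assms(3,4) lcp_le(1) by (intro lcp_greatest) auto
  moreover have "\<not> ?l < lcp x y'"
  proof
    assume gt: "?l < lcp x y'"
    have "x ! ?l = y' ! ?l" using take_lcp[of x y'] gt by (metis nth_take)
    also have "\<dots> = y ! ?l" using assms(1,4) by (metis nth_take)
    finally show False using nth_lcp_neq[of x y] gt lcp_le[of x y'] assms(2,4) by simp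
  qed
  ultimately show ?thesis by simp
qed

lemma foldr_push_eq_cancel:
  assumes "reduced u" "reduced v"
  shows "foldr push u v = take (length u - lcp (rev u) v) u @ drop (lcp (rev u) v) v"
  using assms
proof (induction u arbitrary: v rule: rev_induct)
  case (snoc a u)
  have ru: "reduced u" using snoc.prems(1) reduced_snoc by blast
  show ?case
  proof (cases "v \<noteq> [] \<and> hd v = a")
    case True
    then obtain v' where v: "v = a # v'" by (cases v) auto
    then have "reduced v'" using snoc.prems reduced_ConsD by blast
    then show ?thesis using snoc.IH[OF ru] v by simp
  next
    case False
    then have l: "lcp (rev (u @ [a])) v = 0" by (cases v) auto
    have "push a v = a # v" using False by (cases v) auto
    moreover have "reduced (u @ a # v)"
    proof -
      have "reduced (a # v)" using snoc.prems False by (auto simp: reduced_Cons_iff)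
      then show ?thesis using snoc.prems(1)
        by (induction u rule: reduced.induct) (auto simp: reduced_snoc reduced_Cons_iff)
    qed
    ultimately show ?thesis using l foldr_push_eq_append[of u "a # v"] by simp
  qed
qed simp

lemma length_foldr_push:
  assumes "reduced u" "reduced v"
  shows "length (foldr push u v) + 2 * lcp (rev u) v = length u + length v"
  using foldr_push_eq_cancel[OF assms] lcp_le[of "rev u" v] by simp

text \<open>The two middle letters of a reduced word differ.\<close>
lemma lcp_rev_self_less:
  assumes "reduced b" "length b = 2 * m" "m > 0"
  shows "lcp (rev b) b < m"
proof (rule ccontr)
  assume "\<not> ?thesis"
  then have "take m (rev b) = take m b"
    using take_lcp[of "rev b" b] by (metis min.absorb1 not_less take_take)
  then have "rev b ! (m - 1) = b ! (m - 1)"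
    using assms(3) nth_take[of "m - 1" m] by (metis diff_less zero_less_one)
  moreover have "rev b ! (m - 1) = b ! Suc (m - 1)"
    using assms(2,3) by (simp add: rev_nth)
  moreover have "Suc (m - 1) < length b" using assms(2,3) by simp
  ultimately show False using assms(1) reduced_iff_nth[of b] by auto
qed

lemma involution_odd_length:
  assumes "reduced g" "g \<cdot> g = []" "g \<noteq> []"
  shows "odd (length g)"
proof
  assume "even (length g)"
  then obtain m where m: "length g = 2 * m" by auto
  with assms(3) have "m > 0" by (cases m) auto
  have "lcp (rev g) g = length g"
    using length_foldr_push[OF assms(1) assms(1)] assms(2) by (simp add: mult_W3)
  with lcp_rev_self_less[OF assms(1) m \<open>m > 0\<close>] m show False by simp
qed

section \<open>Automorphisms of W_3 restrict to the kernel\<close>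

abbreviation K :: "gen list monoid" where "K \<equiv> W3\<lparr>carrier := ker_eps\<rparr>"

locale W3_automorphism =
  fixes \<phi>
  assumes aut: "\<phi> \<in> auto W3"
begin

lemma hom: "\<phi> \<in> hom W3 W3"
  using aut by (simp add: auto_def)

lemma bij: "bij_betw \<phi> {w. reduced w} {w. reduced w}"
  using aut by (simp add: auto_def Bij_def)

lemma reduced_image: "reduced w \<Longrightarrow> reduced (\<phi> w)"
  using hom by (auto simp: hom_def)

lemma image_mult: "reduced u \<Longrightarrow> reduced v \<Longrightarrow> \<phi> (u \<cdot> v) = \<phi> u \<cdot> \<phi> v"
  using hom_mult[OF hom] by simp

lemma image_Nil: "\<phi> [] = []"
  using hom_one[OF hom group_W3 group_W3] by simp

lemma inj: "reduced u \<Longrightarrow> reduced v \<Longrightarrow> \<phi> u = \<phi> v \<Longrightarrow> u = v"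
  using bij by (auto simp: bij_betw_def inj_on_def)

lemma surj: "reduced w \<Longrightarrow> \<exists>u. reduced u \<and> \<phi> u = w"
  using bij unfolding bij_betw_def by (metis imageE mem_Collect_eq)

lemma odd_length_generator: "odd (length (\<phi> [a]))"
proof (rule involution_odd_length)
  show "reduced (\<phi> [a])" by (rule reduced_image) simp
  have "\<phi> [a] \<cdot> \<phi> [a] = \<phi> ([a] \<cdot> [a])" by (rule image_mult[symmetric]) auto
  then show "\<phi> [a] \<cdot> \<phi> [a] = []" by (simp add: image_Nil)
  show "\<phi> [a] \<noteq> []" using inj[of "[a]" "[]"] image_Nil by auto
qed

lemma even_length_image: "reduced w \<Longrightarrow> even (length (\<phi> w)) \<longleftrightarrow> even (length w)"
proof (induction w)
  case (Cons a w)
  then have rw: "reduced w" using reduced_ConsD by blast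
  have "a # w = [a] \<cdot> w" using Cons.prems by (cases w) (auto simp: mult_W3)
  then have "\<phi> (a # w) = \<phi> [a] \<cdot> \<phi> w" using image_mult[of "[a]" w] rw by simp
  then show ?case using Cons.IH[OF rw] odd_length_generator[of a] by (simp add: even_length_mult)
qed (simp add: image_Nil)

lemma image_ker_eps: "\<phi> ` ker_eps = ker_eps"
proof
  show "\<phi> ` ker_eps \<subseteq> ker_eps"
    using even_length_image reduced_image by (auto simp: ker_eps_iff)
  show "ker_eps \<subseteq> \<phi> ` ker_eps"
  proof
    fix w assume w: "w \<in> ker_eps"
    then obtain u where "reduced u" "\<phi> u = w" using surj by (auto simp: ker_eps_iff)
    with w even_length_image show "w \<in> \<phi> ` ker_eps" by (auto simp: ker_eps_iff)
  qed
qed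

lemma iota_auto: "iota \<phi> \<in> auto K"
proof -
  have "iota \<phi> \<in> hom K K"
    using image_ker_eps W3.subgroupE(4)[OF subgroup_ker_eps]
    by (auto simp: hom_def iota_def ker_eps_iff image_mult)
  moreover have "bij_betw (iota \<phi>) ker_eps ker_eps"
    unfolding iota_def bij_betw_restrict_eq bij_betw_def
    using inj image_ker_eps by (auto simp: inj_on_def ker_eps_iff)
  ultimately show ?thesis by (simp add: auto_def Bij_def iota_def)
qed

end

lemma iota_hom: "iota \<in> hom (AutoGroup W3) (AutoGroup K)"
proof (rule homI)
  fix \<phi> assume "\<phi> \<in> carrier (AutoGroup W3)"
  then interpret W3_automorphism \<phi> by (simp add: AutoGroup_def W3_automorphism_def)
  show "iota \<phi> \<in> carrier (AutoGroup K)" using iota_auto by (simp add: AutoGroup_def)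
next
  fix \<phi> \<psi> assume auts: "\<phi> \<in> carrier (AutoGroup W3)" "\<psi> \<in> carrier (AutoGroup W3)"
  then interpret \<phi>: W3_automorphism \<phi> by (simp add: AutoGroup_def W3_automorphism_def)
  interpret \<psi>: W3_automorphism \<psi> using auts by (simp add: AutoGroup_def W3_automorphism_def)
  have "iota (compose {w. reduced w} \<phi> \<psi>) = compose ker_eps (iota \<phi>) (iota \<psi>)"
    unfolding iota_def compose_def
    by (rule ext) (auto simp: ker_eps_iff \<psi>.even_length_image \<psi>.reduced_image)
  then show "iota (\<phi> \<otimes>\<^bsub>AutoGroup W3\<^esub> \<psi>) = iota \<phi> \<otimes>\<^bsub>AutoGroup K\<^esub> iota \<psi>"
    using \<phi>.aut \<psi>.aut \<phi>.iota_auto \<psi>.iota_auto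
    by (simp add: AutoGroup_def BijGroup_def auto_def)
qed

lemma Nil_if_inverted_by_generators:
  assumes "reduced h" "\<And>i. [i] \<cdot> h \<cdot> [i] = inv\<^bsub>W3\<^esub> h"
  shows "h = []"
proof (rule ccontr)
  assume "h \<noteq> []"
  obtain i where i: "i \<noteq> hd h" "i \<noteq> last h"
    by (cases "hd h"; cases "last h") (auto intro: gen.exhaust)
  have "reduced (h @ [i])" using assms(1) i by (simp add: reduced_snoc)
  then have "reduced (i # h @ [i])" using i \<open>h \<noteq> []\<close> by (simp add: reduced_Cons_iff)
  then have "[i] \<cdot> (h \<cdot> [i]) = i # h @ [i]"
    using foldr_push_eq_append[of "[i]" "h @ [i]"] foldr_push_eq_append[of h "[i]"]
    by (simp add: mult_W3 reduced_Cons_iff)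
  moreover have "[i] \<cdot> h \<cdot> [i] = [i] \<cdot> (h \<cdot> [i])" using assms(1) by (simp add: W3.m_assoc)
  ultimately have "length (inv\<^bsub>W3\<^esub> h) = length h + 2" using assms(2)[of i] by simp
  then show False using assms(1) by (simp add: inv_W3)
qed

lemma aut_eq_if_eq_on_generators:
  assumes "\<phi> \<in> auto W3" "\<psi> \<in> auto W3" and generator: "\<And>i. \<phi> [i] = \<psi> [i]"
  shows "\<phi> = \<psi>"
proof
  interpret \<phi>: W3_automorphism \<phi> using assms(1) by unfold_locales
  interpret \<psi>: W3_automorphism \<psi> using assms(2) by unfold_locales
  fix w
  show "\<phi> w = \<psi> w"
  proof (cases "reduced w")
    case True
    then show ?thesis
    proof (induction w)
      case (Cons a w)
      then have "reduced w" using reduced_ConsD by blast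
      moreover have "a # w = [a] \<cdot> w" using Cons.prems by (cases w) (auto simp: mult_W3)
      ultimately show ?case
        using \<phi>.image_mult[of "[a]" w] \<psi>.image_mult[of "[a]" w] Cons.IH generator by simp
    qed (simp add: \<phi>.image_Nil \<psi>.image_Nil)
  qed (use assms(1,2) in \<open>auto simp: auto_def Bij_def extensional_def\<close>)
qed

lemma aut_eq_if_eq_on_ker_eps:
  assumes "\<phi> \<in> auto W3" "\<psi> \<in> auto W3" and eq: "\<And>k. k \<in> ker_eps \<Longrightarrow> \<phi> k = \<psi> k"
  shows "\<phi> = \<psi>"
proof (rule aut_eq_if_eq_on_generators[OF assms(1,2)])
  interpret \<phi>: W3_automorphism \<phi> using assms(1) by unfold_locales
  interpret \<psi>: W3_automorphism \<psi> using assms(2) by unfold_locales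
  have carrier: "\<phi> [i] \<in> carrier W3" "\<psi> [i] \<in> carrier W3" for i
    using \<phi>.reduced_image \<psi>.reduced_image by auto
  have involution: "\<phi> [i] \<cdot> \<phi> [i] = []" "\<psi> [i] \<cdot> \<psi> [i] = []" for i
    using \<phi>.image_mult[of "[i]" "[i]"] \<psi>.image_mult[of "[i]" "[i]"] \<phi>.image_Nil \<psi>.image_Nil
    by simp_all
  define g where "g = \<phi> [S1] \<cdot> \<psi> [S1]"
  have \<phi>_generator: "\<phi> [i] = g \<cdot> \<psi> [i]" for i
  proof -
    have "\<phi> [S1] \<cdot> \<phi> [i] = \<psi> [S1] \<cdot> \<psi> [i]"
    proof (cases "i = S1")
      case False
      then have "[S1] \<cdot> [i] \<in> ker_eps" by (simp add: mult_W3 ker_eps_iff)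
      then show ?thesis using eq \<phi>.image_mult \<psi>.image_mult by (metis reduced.simps(2))
    qed (use involution in simp)
    have "\<phi> [i] = \<phi> [S1] \<cdot> (\<phi> [S1] \<cdot> \<phi> [i])"
      using involution carrier by (simp add: W3.m_assoc[symmetric])
    also have "\<dots> = g \<cdot> \<psi> [i]"
      unfolding g_def using \<open>\<phi> [S1] \<cdot> \<phi> [i] = \<psi> [S1] \<cdot> \<psi> [i]\<close> carrier by (simp add: W3.m_assoc)
    finally show ?thesis .
  qed
  obtain h where h: "reduced h" "\<psi> h = g"
    using \<psi>.surj[of g] W3.m_closed[OF carrier(1) carrier(2)] unfolding g_def by auto
  have "h = []"
  proof (rule Nil_if_inverted_by_generators[OF h(1)])
    fix i
    have "\<psi> ((h \<cdot> [i]) \<cdot> (h \<cdot> [i])) = \<phi> [i] \<cdot> \<phi> [i]"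
      using h \<psi>.image_mult \<phi>_generator by simp
    then have "\<psi> ((h \<cdot> [i]) \<cdot> (h \<cdot> [i])) = \<psi> []" by (simp only: involution \<psi>.image_Nil)
    then have "(h \<cdot> [i]) \<cdot> (h \<cdot> [i]) = []" by (rule \<psi>.inj[rotated 2]) (simp_all add: h(1))
    then have right_inverse: "h \<cdot> ([i] \<cdot> h \<cdot> [i]) = \<one>\<^bsub>W3\<^esub>" using h(1) by (simp add: W3.m_assoc)
    have "([i] \<cdot> h \<cdot> [i]) \<cdot> h = \<one>\<^bsub>W3\<^esub>" using W3.inv_comm[OF right_inverse] h(1) by simp
    then show "[i] \<cdot> h \<cdot> [i] = inv\<^bsub>W3\<^esub> h" using W3.inv_equality h(1) by simp
  qed
  then show "\<phi> [i] = \<psi> [i]" for i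
    using \<phi>_generator h \<psi>.image_Nil carrier by simp
qed

lemma inj_on_iota: "inj_on iota (auto W3)"
proof (rule inj_onI)
  fix \<phi> \<psi> assume auts: "\<phi> \<in> auto W3" "\<psi> \<in> auto W3" and eq: "iota \<phi> = iota \<psi>"
  have "\<phi> k = \<psi> k" if "k \<in> ker_eps" for k
  proof -
    have "\<phi> k = iota \<phi> k" using that by (simp add: iota_def)
    also have "\<dots> = iota \<psi> k" by (simp only: eq)
    also have "\<dots> = \<psi> k" using that by (simp add: iota_def)
    finally show ?thesis .
  qed
  then show "\<phi> = \<psi>" by (rule aut_eq_if_eq_on_ker_eps[OF auts])
qed

section \<open>Extending automorphisms of the kernel\<close>

lemma mult_closed_ker_eps: "k \<in> ker_eps \<Longrightarrow> l \<in> ker_eps \<Longrightarrow> k \<cdot> l \<in> ker_eps"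
  by (rule subgroup.m_closed[OF subgroup_ker_eps])

lemma inv_closed_ker_eps: "k \<in> ker_eps \<Longrightarrow> inv\<^bsub>W3\<^esub> k \<in> ker_eps"
  by (rule subgroup.m_inv_closed[OF subgroup_ker_eps])

lemma ker_eps_induct [consumes 1, case_names Nil Cons2]:
  assumes "k \<in> ker_eps" "P []"
    and "\<And>a b k. a \<noteq> b \<Longrightarrow> k \<in> ker_eps \<Longrightarrow> P k \<Longrightarrow> P ([a, b] \<cdot> k)"
  shows "P k"
  using assms(1)
proof (induction k rule: length_induct)
  case (1 k)
  show ?case
  proof (cases k)
    case (Cons a k1)
    then obtain b k' where k: "k = a # b # k'" using "1.prems" by (cases k1) (auto simp: ker_eps_iff)
    then have "a \<noteq> b" "reduced k'" and k': "k' \<in> ker_eps"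
      using "1.prems" by (auto simp: ker_eps_iff dest: reduced_ConsD)
    moreover have "[a, b] \<cdot> k' = k"
      using "1.prems" k foldr_push_eq_append[of "[a, b]" k'] by (simp add: mult_W3 ker_eps_iff)
    moreover have "P k'" using "1.IH" k k' by auto
    ultimately show ?thesis using assms(3) by metis
  qed (simp add: assms(2))
qed

definition x\<^sub>1 :: "gen list" where "x\<^sub>1 = [S1, S2]"
definition x\<^sub>2 :: "gen list" where "x\<^sub>2 = [S2, S3]"

lemma s2_conj_in_ker_eps: "k \<in> ker_eps \<Longrightarrow> [S2] \<cdot> k \<cdot> [S2] \<in> ker_eps"
  by (simp add: ker_eps_iff even_length_mult)

lemma x_in_ker_eps [simp]: "x\<^sub>1 \<in> ker_eps" "x\<^sub>2 \<in> ker_eps"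
  by (simp_all add: x\<^sub>1_def x\<^sub>2_def ker_eps_iff)

lemma two_letter_word_cases:
  "a \<noteq> b \<Longrightarrow> [a, b] \<in> {x\<^sub>1, x\<^sub>2, inv\<^bsub>W3\<^esub> x\<^sub>1, inv\<^bsub>W3\<^esub> x\<^sub>2, x\<^sub>1 \<cdot> x\<^sub>2, inv\<^bsub>W3\<^esub> x\<^sub>2 \<cdot> inv\<^bsub>W3\<^esub> x\<^sub>1}"
  by (cases a; cases b) (simp_all add: x\<^sub>1_def x\<^sub>2_def inv_W3 mult_W3)

lemma s2_conj_x: "[S2] \<cdot> x\<^sub>1 \<cdot> [S2] = inv\<^bsub>W3\<^esub> x\<^sub>1" "[S2] \<cdot> x\<^sub>2 \<cdot> [S2] = inv\<^bsub>W3\<^esub> x\<^sub>2"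
  by (simp_all add: x\<^sub>1_def x\<^sub>2_def inv_W3 mult_W3)

locale K_automorphism =
  fixes \<alpha>
  assumes aut: "\<alpha> \<in> auto K"
begin

lemma hom: "\<alpha> \<in> hom K K"
  using aut by (simp add: auto_def)

lemma bij: "bij_betw \<alpha> ker_eps ker_eps"
  using aut by (simp add: auto_def Bij_def)

lemma closed: "k \<in> ker_eps \<Longrightarrow> \<alpha> k \<in> ker_eps"
  using hom by (auto simp: hom_def)

lemma reduced_image: "k \<in> ker_eps \<Longrightarrow> reduced (\<alpha> k)"
  using closed by (simp add: ker_eps_iff)

lemma image_mult: "k \<in> ker_eps \<Longrightarrow> l \<in> ker_eps \<Longrightarrow> \<alpha> (k \<cdot> l) = \<alpha> k \<cdot> \<alpha> l"
  using hom_mult[OF hom] by simp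

lemma group_hom: "group_hom K K \<alpha>"
  using subgroup.subgroup_is_group[OF subgroup_ker_eps group_W3] hom
  by (simp add: group_hom_def group_hom_axioms_def)

lemma image_Nil: "\<alpha> [] = []"
  using group_hom.hom_one[OF group_hom] by simp

lemma image_inv: "k \<in> ker_eps \<Longrightarrow> \<alpha> (inv\<^bsub>W3\<^esub> k) = inv\<^bsub>W3\<^esub> (\<alpha> k)"
  using group_hom.hom_inv[OF group_hom, of k] closed[of k]
  by (simp add: W3.m_inv_consistent[OF subgroup_ker_eps])

lemma inj: "k \<in> ker_eps \<Longrightarrow> l \<in> ker_eps \<Longrightarrow> \<alpha> k = \<alpha> l \<Longrightarrow> k = l"
  using bij by (auto simp: bij_betw_def inj_on_def)

lemma surj: "k \<in> ker_eps \<Longrightarrow> \<exists>l \<in> ker_eps. \<alpha> l = k"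
  using bij unfolding bij_betw_def by (metis imageE)

end

locale K_automorphism_with_inverter = K_automorphism +
  fixes t
  assumes reduced_t: "reduced t" and t_involution: "t \<cdot> t = []"
    and t_inverts: "t \<cdot> \<alpha> x\<^sub>1 \<cdot> t = inv\<^bsub>W3\<^esub> (\<alpha> x\<^sub>1)" "t \<cdot> \<alpha> x\<^sub>2 \<cdot> t = inv\<^bsub>W3\<^esub> (\<alpha> x\<^sub>2)"
begin

lemma t_carrier: "t \<in> carrier W3"
  using reduced_t by simp

lemma t_t_mult [simp]: "reduced x \<Longrightarrow> t \<cdot> (t \<cdot> x) = x"
  using t_involution t_carrier by (simp add: W3.m_assoc[symmetric])

lemma odd_length_t: "odd (length t)"
proof (rule involution_odd_length[OF reduced_t t_involution])
  show "t \<noteq> []"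
  proof
    assume "t = []"
    then have "\<alpha> x\<^sub>1 = inv\<^bsub>W3\<^esub> (\<alpha> x\<^sub>1)"
      using t_inverts(1) reduced_image[of x\<^sub>1] by simp
    then have "\<alpha> x\<^sub>1 \<cdot> \<alpha> x\<^sub>1 = []"
      using W3.r_inv[of "\<alpha> x\<^sub>1"] reduced_image[of x\<^sub>1] by simp
    moreover have "even (length (\<alpha> x\<^sub>1))" using closed[OF x_in_ker_eps(1)] by (simp add: ker_eps_iff)
    ultimately have "\<alpha> x\<^sub>1 = \<alpha> []"
      using involution_odd_length[of "\<alpha> x\<^sub>1"] reduced_image[of x\<^sub>1] image_Nil by auto
    then show False using inj[of x\<^sub>1 "[]"] by (simp add: ker_eps_iff x\<^sub>1_def)
  qed
qed

lemma conj_s2_mult: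
  assumes "k \<in> ker_eps" "l \<in> ker_eps"
    and "\<alpha> ([S2] \<cdot> k \<cdot> [S2]) = t \<cdot> \<alpha> k \<cdot> t" "\<alpha> ([S2] \<cdot> l \<cdot> [S2]) = t \<cdot> \<alpha> l \<cdot> t"
  shows "\<alpha> ([S2] \<cdot> (k \<cdot> l) \<cdot> [S2]) = t \<cdot> \<alpha> (k \<cdot> l) \<cdot> t"
proof -
  have "[S2] \<cdot> (k \<cdot> l) \<cdot> [S2] = ([S2] \<cdot> k \<cdot> [S2]) \<cdot> ([S2] \<cdot> l \<cdot> [S2])"
    using assms(1,2) by (simp add: ker_eps_iff W3.m_assoc)
  then have "\<alpha> ([S2] \<cdot> (k \<cdot> l) \<cdot> [S2]) = (t \<cdot> \<alpha> k \<cdot> t) \<cdot> (t \<cdot> \<alpha> l \<cdot> t)"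
    using image_mult[OF s2_conj_in_ker_eps s2_conj_in_ker_eps] assms by simp
  also have "\<dots> = t \<cdot> \<alpha> (k \<cdot> l) \<cdot> t"
    using assms(1,2) t_carrier reduced_image by (simp add: image_mult W3.m_assoc)
  finally show ?thesis .
qed

lemma conj_s2_inv:
  assumes "k \<in> ker_eps" "\<alpha> ([S2] \<cdot> k \<cdot> [S2]) = t \<cdot> \<alpha> k \<cdot> t"
  shows "\<alpha> ([S2] \<cdot> inv\<^bsub>W3\<^esub> k \<cdot> [S2]) = t \<cdot> \<alpha> (inv\<^bsub>W3\<^esub> k) \<cdot> t"
proof -
  have "[S2] \<cdot> inv\<^bsub>W3\<^esub> k \<cdot> [S2] = inv\<^bsub>W3\<^esub> ([S2] \<cdot> k \<cdot> [S2])"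
    using assms(1) by (simp add: ker_eps_iff W3.inv_mult_group W3.m_assoc)
  then have "\<alpha> ([S2] \<cdot> inv\<^bsub>W3\<^esub> k \<cdot> [S2]) = inv\<^bsub>W3\<^esub> (t \<cdot> \<alpha> k \<cdot> t)"
    using image_inv[OF s2_conj_in_ker_eps[OF assms(1)]] assms(2) by simp
  also have "\<dots> = t \<cdot> \<alpha> (inv\<^bsub>W3\<^esub> k) \<cdot> t"
    using assms(1) t_carrier t_involution reduced_image W3.inv_equality[of t t]
    by (simp add: image_inv W3.inv_mult_group W3.m_assoc)
  finally show ?thesis .
qed

lemma conj_s2: "k \<in> ker_eps \<Longrightarrow> \<alpha> ([S2] \<cdot> k \<cdot> [S2]) = t \<cdot> \<alpha> k \<cdot> t"
proof (induction rule: ker_eps_induct)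
  case Nil
  show ?case using image_Nil t_involution reduced_t by simp
next
  case (Cons2 a b k)
  have "\<alpha> ([S2] \<cdot> x \<cdot> [S2]) = t \<cdot> \<alpha> x \<cdot> t"
    if "x \<in> {x\<^sub>1, x\<^sub>2, inv\<^bsub>W3\<^esub> x\<^sub>1, inv\<^bsub>W3\<^esub> x\<^sub>2, x\<^sub>1 \<cdot> x\<^sub>2, inv\<^bsub>W3\<^esub> x\<^sub>2 \<cdot> inv\<^bsub>W3\<^esub> x\<^sub>1}" for x
  proof -
    have "\<alpha> ([S2] \<cdot> x \<cdot> [S2]) = t \<cdot> \<alpha> x \<cdot> t" if "x \<in> {x\<^sub>1, x\<^sub>2}" for x
      using that t_inverts s2_conj_x image_inv by auto
    then show ?thesis
      using that conj_s2_mult conj_s2_inv inv_closed_ker_eps by auto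
  qed
  then have "\<alpha> ([S2] \<cdot> [a, b] \<cdot> [S2]) = t \<cdot> \<alpha> [a, b] \<cdot> t"
    using two_letter_word_cases[OF Cons2(1)] by blast
  then show ?case using conj_s2_mult Cons2 by (simp add: ker_eps_iff)
qed

text \<open>The extension sends s_2 to t: an odd word w is (w s_2) s_2 with w s_2 \<in> ker \<epsilon>.\<close>
definition extension :: "gen list \<Rightarrow> gen list" where
  "extension w = (if reduced w then if even (length w) then \<alpha> w else \<alpha> (w \<cdot> [S2]) \<cdot> t
    else undefined)"

lemma odd_mult_s2: "reduced u \<Longrightarrow> odd (length u) \<Longrightarrow> u \<cdot> [S2] \<in> ker_eps"
  by (simp add: ker_eps_iff even_length_mult)

lemma reduced_extension: "reduced w \<Longrightarrow> reduced (extension w)"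
  using reduced_image[OF odd_mult_s2] reduced_image[of w] reduced_t
  by (simp add: extension_def ker_eps_iff)

lemma even_length_extension:
  "reduced w \<Longrightarrow> even (length (extension w)) \<longleftrightarrow> even (length w)"
  using odd_length_t closed odd_mult_s2
  by (auto simp: extension_def even_length_mult ker_eps_iff)

lemma extension_mult:
  assumes u: "reduced u" and v: "reduced v"
  shows "extension (u \<cdot> v) = extension u \<cdot> extension v"
proof -
  have conj_s2': "\<alpha> ([S2] \<cdot> (k \<cdot> [S2])) = t \<cdot> (\<alpha> k \<cdot> t)" if "k \<in> ker_eps" for k
    using conj_s2[OF that] that reduced_image[OF that] t_carrier by (simp add: ker_eps_iff W3.m_assoc)
  have s2_conj_ker_eps: "[S2] \<cdot> (k \<cdot> [S2]) \<in> ker_eps" if "k \<in> ker_eps" for k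
    using that by (simp add: ker_eps_iff even_length_mult)
  show ?thesis
  proof (cases "even (length u)"; cases "even (length v)")
    assume "even (length u)" "even (length v)"
    then show ?thesis using u v image_mult[of u v] by (simp add: extension_def ker_eps_iff even_length_mult)
  next
    assume eu: "even (length u)" and ov: "odd (length v)"
    then have "\<alpha> (u \<cdot> v \<cdot> [S2]) = \<alpha> u \<cdot> \<alpha> (v \<cdot> [S2])"
      using u v image_mult[of u "v \<cdot> [S2]"] odd_mult_s2 by (simp add: ker_eps_iff W3.m_assoc)
    then show ?thesis
      using u v eu ov odd_mult_s2[OF v ov] reduced_image t_carrier
      by (simp add: extension_def even_length_mult W3.m_assoc ker_eps_iff)
  next
    assume ou: "odd (length u)" and ev: "even (length v)"
    then have vK: "v \<in> ker_eps" using v by (simp add: ker_eps_iff)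
    have "u \<cdot> v \<cdot> [S2] = (u \<cdot> [S2]) \<cdot> ([S2] \<cdot> (v \<cdot> [S2]))" using u v by (simp add: W3.m_assoc)
    then have "\<alpha> (u \<cdot> v \<cdot> [S2]) = \<alpha> (u \<cdot> [S2]) \<cdot> (t \<cdot> (\<alpha> v \<cdot> t))"
      using image_mult[OF odd_mult_s2[OF u ou] s2_conj_ker_eps[OF vK]] conj_s2'[OF vK] by simp
    then show ?thesis
      using u v ou ev odd_mult_s2[OF u ou] vK reduced_image t_carrier t_involution
      by (simp add: extension_def even_length_mult W3.m_assoc ker_eps_iff)
  next
    assume ou: "odd (length u)" and ov: "odd (length v)"
    have vK: "v \<cdot> [S2] \<in> ker_eps" using odd_mult_s2[OF v ov] .
    have "u \<cdot> v = (u \<cdot> [S2]) \<cdot> ([S2] \<cdot> ((v \<cdot> [S2]) \<cdot> [S2]))" using u v by (simp add: W3.m_assoc)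
    then have "\<alpha> (u \<cdot> v) = \<alpha> (u \<cdot> [S2]) \<cdot> (t \<cdot> (\<alpha> (v \<cdot> [S2]) \<cdot> t))"
      using image_mult[OF odd_mult_s2[OF u ou] s2_conj_ker_eps[OF vK]] conj_s2'[OF vK] by simp
    then show ?thesis
      using u v ou ov odd_mult_s2[OF u ou] vK reduced_image t_carrier t_involution
      by (simp add: extension_def even_length_mult W3.m_assoc ker_eps_iff)
  qed
qed

lemma extension_inj:
  assumes u: "reduced u" and v: "reduced v" and eq: "extension u = extension v"
  shows "u = v"
proof -
  have parity: "even (length u) \<longleftrightarrow> even (length v)"
    using even_length_extension[OF u] even_length_extension[OF v] eq by simp
  show ?thesis
  proof (cases "even (length u)")
    case True
    then show ?thesis using parity eq u v inj by (simp add: extension_def ker_eps_iff)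
  next
    case False
    then have "\<alpha> (u \<cdot> [S2]) \<cdot> t = \<alpha> (v \<cdot> [S2]) \<cdot> t" using parity eq u v by (simp add: extension_def)
    then have "\<alpha> (u \<cdot> [S2]) = \<alpha> (v \<cdot> [S2])"
      using u v False parity odd_mult_s2 reduced_image t_carrier by (simp add: ker_eps_iff)
    then have "u \<cdot> [S2] = v \<cdot> [S2]" using inj odd_mult_s2 u v False parity by blast
    then show ?thesis using W3.right_cancel[of "[S2]" u v] u v by simp
  qed
qed

lemma extension_surj:
  assumes w: "reduced w"
  shows "\<exists>u. reduced u \<and> extension u = w"
proof (cases "even (length w)")
  case True
  with w have "w \<in> ker_eps" by (simp add: ker_eps_iff)
  then obtain l where "l \<in> ker_eps" "\<alpha> l = w" using surj by blast
  then show ?thesis by (intro exI[of _ l]) (auto simp: extension_def ker_eps_iff)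
next
  case False
  then have "w \<cdot> t \<in> ker_eps" using w odd_length_t reduced_t by (simp add: ker_eps_iff even_length_mult)
  then obtain l where l: "l \<in> ker_eps" "\<alpha> l = w \<cdot> t" using surj by blast
  then have "reduced l" "even (length l)" by (auto simp: ker_eps_iff)
  then have "extension (l \<cdot> [S2]) = \<alpha> l \<cdot> t"
    by (simp add: extension_def even_length_mult W3.m_assoc)
  also have "\<dots> = w" using l(2) w reduced_t t_involution by (simp add: W3.m_assoc)
  finally show ?thesis using \<open>reduced l\<close> by (intro exI[of _ "l \<cdot> [S2]"]) simp
qed

lemma extension_auto: "extension \<in> auto W3"
proof -
  have "extension \<in> hom W3 W3"
    by (rule homI) (auto simp: reduced_extension extension_mult)
  moreover have "bij_betw extension (carrier W3) (carrier W3)"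
    unfolding bij_betw_def inj_on_def
    using extension_inj extension_surj reduced_extension by fastforce
  moreover have "extension \<in> extensional (carrier W3)"
    by (simp add: extension_def extensional_def)
  ultimately show ?thesis by (simp add: auto_def Bij_def)
qed

lemma iota_extension: "iota extension = \<alpha>"
proof
  fix k
  show "iota extension k = \<alpha> k"
    using aut by (auto simp: iota_def extension_def ker_eps_iff auto_def Bij_def extensional_def)
qed

end

section \<open>Nielsen reduction\<close>

fun gen_index :: "gen \<Rightarrow> nat" where
  "gen_index S1 = 0" | "gen_index S2 = 1" | "gen_index S3 = 2"

lemma gen_index_less: "gen_index g < 3"
  by (cases g) auto

lemma gen_index_inject: "gen_index g = gen_index h \<Longrightarrow> g = h"
  by (cases g; cases h) auto

definition word_rank :: "gen list \<Rightarrow> nat" where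
  "word_rank w = foldl (\<lambda>n g. 3 * n + gen_index g) 0 w"

lemma word_rank_snoc: "word_rank (x @ [g]) = 3 * word_rank x + gen_index g"
  by (simp add: word_rank_def)

lemma word_rank_append: "word_rank (x @ y) = word_rank x * 3 ^ length y + word_rank y"
  by (induction y rule: rev_induct)
    (simp_all add: word_rank_def algebra_simps flip: append_assoc)

lemma word_rank_less: "word_rank w < 3 ^ length w"
proof (induction w rule: rev_induct)
  case (snoc g w)
  then show ?case using gen_index_less[of g] by (simp add: word_rank_snoc)
qed (simp add: word_rank_def)

lemma word_rank_inject: "length x = length y \<Longrightarrow> word_rank x = word_rank y \<Longrightarrow> x = y"
proof (induction x arbitrary: y rule: rev_induct)
  case (snoc g x)
  then obtain y' h where y: "y = y' @ [h]" by (cases y rule: rev_exhaust) auto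
  with snoc.prems have eq: "3 * word_rank x + gen_index g = 3 * word_rank y' + gen_index h"
    by (simp add: word_rank_snoc)
  then have "gen_index g = gen_index h"
    using gen_index_less[of g] gen_index_less[of h] by presburger
  with eq snoc y show ?case by (simp add: gen_index_inject)
qed simp

lemma word_rank_append_less:
  assumes "length p = length q" "word_rank p < word_rank q" "length x = length y"
  shows "word_rank (p @ x) < word_rank (q @ y)"
proof -
  have "word_rank (p @ x) < (word_rank p + 1) * 3 ^ length x"
    using word_rank_less[of x] by (simp add: word_rank_append)
  also have "\<dots> \<le> word_rank q * 3 ^ length x" using assms(2) by (intro mult_le_mono1) simp
  also have "\<dots> \<le> word_rank (q @ y)" using assms(3) by (simp add: word_rank_append)
  finally show ?thesis .
qed

text \<open>The secondary complexity of Nielsen reduction, breaking ties between words of equal length.\<close>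
definition half_rank :: "gen list \<Rightarrow> nat" where
  "half_rank w = word_rank (take (length w div 2) w) + word_rank (take (length w div 2) (rev w))"

lemma half_rank_rev: "half_rank (rev w) = half_rank w"
  by (simp add: half_rank_def)

definition nielsen_less :: "gen list \<Rightarrow> gen list \<Rightarrow> bool" where
  "nielsen_less u v \<longleftrightarrow>
    length u < length v \<or> length u = length v \<and> half_rank u < half_rank v"

lemma half_cancellation_decomposition:
  assumes "reduced b" "length b = 2 * m" "m > 0" "2 * m \<le> length a"
    and "lcp (rev a) b = m" "lcp (rev b) a = m"
  obtains p q c where "b = p @ q" "length p = m" "length q = m" "a = rev q @ c @ rev p"
    "p \<noteq> rev q"
proof -
  define p q where "p = take m b" and "q = drop m b"
  have b: "b = p @ q" and lp: "length p = m" and lq: "length q = m"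
    using assms(2) by (simp_all add: p_def q_def)
  have "take m (rev b) = take m a" using take_lcp[of "rev b" a] assms(6) by simp
  then have take_a: "take m a = rev q" using b lp lq by simp
  have "take m (rev a) = p" using take_lcp[of "rev a" b] assms(5) by (simp add: p_def)
  moreover have "take m (rev a) = rev (drop (length a - m) a)"
    using assms(4) by (simp add: rev_drop)
  ultimately have drop_a: "drop (length a - m) a = rev p" by (metis rev_rev_ident)
  define c where "c = drop m (take (length a - m) a)"
  have "m \<le> length a - m" using assms(4) by simp
  then have "take m (take (length a - m) a) = take m a" by (simp add: min_def)
  then have "take (length a - m) a = take m a @ c"
    unfolding c_def by (metis append_take_drop_id)
  then have "a = take m a @ c @ drop (length a - m) a"
    by (metis append.assoc append_take_drop_id)
  then have "a = rev q @ c @ rev p" by (simp only: take_a drop_a)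
  moreover have "p \<noteq> rev q"
  proof
    assume "p = rev q"
    then have "b ! (m - 1) = b ! Suc (m - 1)"
      using b lp lq assms(3) by (simp add: nth_append rev_nth)
    moreover have "Suc (m - 1) < length b" using assms(2,3) by simp
    ultimately show False using assms(1) reduced_iff_nth[of b] by auto
  qed
  ultimately show ?thesis using that b lp lq by blast
qed

lemma nielsen_less_if_half_cancellation:
  assumes "reduced a" "reduced b" "length b = 2 * m" "m > 0" "2 * m \<le> length a"
    "even (length a)" "lcp (rev a) b = m" "lcp (rev b) a = m"
  shows "nielsen_less (b \<cdot> a) a \<or> nielsen_less (a \<cdot> b) a"
proof -
  obtain p q c where b: "b = p @ q" and lp: "length p = m" and lq: "length q = m"
    and a: "a = rev q @ c @ rev p" and pq: "p \<noteq> rev q"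
    using half_cancellation_decomposition[OF assms(2-5,7,8)] .
  obtain j where j: "length c = 2 * j" using a lp lq assms(6) by (auto elim!: evenE)
  have ba: "b \<cdot> a = p @ c @ rev p"
    using foldr_push_eq_cancel[OF assms(2,1)] assms(8) a lp lq by (simp add: mult_W3 b)
  have ab: "a \<cdot> b = rev q @ c @ q"
    using foldr_push_eq_cancel[OF assms(1,2)] assms(7) a lp lq by (simp add: mult_W3 b)
  define C1 C2 where "C1 = take j c" and "C2 = take j (rev c)"
  have lengths: "length (b \<cdot> a) = length a" "length (a \<cdot> b) = length a"
    unfolding ba ab using a lp lq by simp_all
  have half: "length a div 2 = m + j" using a lp lq j by simp
  have ranks: "half_rank a = word_rank (rev q @ C1) + word_rank (p @ C2)"
    unfolding half_rank_def half using lp lq j by (simp add: a C1_def C2_def)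
  have ranks_ba: "half_rank (b \<cdot> a) = word_rank (p @ C1) + word_rank (p @ C2)"
    unfolding half_rank_def lengths half ba using lp j by (simp add: C1_def C2_def)
  have ranks_ab: "half_rank (a \<cdot> b) = word_rank (rev q @ C1) + word_rank (rev q @ C2)"
    unfolding half_rank_def lengths half ab using lq j by (simp add: C1_def C2_def)
  have "word_rank p \<noteq> word_rank (rev q)" using pq word_rank_inject lp lq by auto
  then consider "word_rank p < word_rank (rev q)" | "word_rank (rev q) < word_rank p" by linarith
  then show ?thesis
  proof cases
    case 1
    then have "word_rank (p @ C1) < word_rank (rev q @ C1)" using lp lq by (intro word_rank_append_less) auto
    then show ?thesis using lengths ranks ranks_ba ranks_ab by (simp add: nielsen_less_def)
  next
    case 2
    then have "word_rank (rev q @ C2) < word_rank (p @ C2)" using lp lq by (intro word_rank_append_less) auto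
    then show ?thesis using lengths ranks ranks_ba ranks_ab by (simp add: nielsen_less_def)
  qed
qed

fun list_product :: "gen list list \<Rightarrow> gen list" where
  "list_product [] = []"
| "list_product (a # L) = a \<cdot> list_product L"

definition products :: "gen list set \<Rightarrow> gen list set" where
  "products S = {list_product L | L. set L \<subseteq> S}"

lemma reduced_list_product: "\<forall>a\<in>set L. reduced a \<Longrightarrow> reduced (list_product L)"
  by (induction L) auto

lemma list_product_append:
  "\<forall>a\<in>set L. reduced a \<Longrightarrow> \<forall>a\<in>set M. reduced a \<Longrightarrow>
    list_product (L @ M) = list_product L \<cdot> list_product M"
  by (induction L) (auto simp: W3.m_assoc reduced_list_product)

lemma Nil_in_products: "[] \<in> products S"
  unfolding products_def by (rule CollectI, rule exI[of _ "[]"]) simp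

lemma in_products: "x \<in> S \<Longrightarrow> reduced x \<Longrightarrow> x \<in> products S"
  unfolding products_def by (rule CollectI, rule exI[of _ "[x]"]) simp

lemma mult_in_products:
  assumes "\<forall>a\<in>S. reduced a" "x \<in> products S" "y \<in> products S"
  shows "x \<cdot> y \<in> products S"
proof -
  obtain L M where "set L \<subseteq> S" "x = list_product L" "set M \<subseteq> S" "y = list_product M"
    using assms(2,3) by (auto simp: products_def)
  moreover from this assms(1) have "\<forall>a\<in>set L. reduced a" "\<forall>a\<in>set M. reduced a" by auto
  ultimately have "x \<cdot> y = list_product (L @ M)" "set (L @ M) \<subseteq> S"
    using list_product_append[of L M] by auto
  then show ?thesis unfolding products_def by blast
qed

lemma products_mono:
  assumes "\<forall>a\<in>T. reduced a" "S \<subseteq> products T"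
  shows "products S \<subseteq> products T"
proof
  fix x assume "x \<in> products S"
  then obtain L where L: "set L \<subseteq> S" "x = list_product L" by (auto simp: products_def)
  have "list_product L \<in> products T" using L(1)
    by (induction L) (use assms in \<open>auto intro: Nil_in_products mult_in_products\<close>)
  then show "x \<in> products T" using L by simp
qed

lemma list_product_in_powers:
  assumes "reduced z" "set L \<subseteq> {[], z, rev z}"
  shows "\<exists>n::int. list_product L = z [^]\<^bsub>W3\<^esub> n"
  using assms(2)
proof (induction L)
  case Nil
  show ?case by (intro exI[of _ 0]) simp
next
  case (Cons a L)
  then obtain n :: int where n: "list_product L = z [^]\<^bsub>W3\<^esub> n" by auto
  have z: "z \<in> carrier W3" using assms(1) by simp
  have "a = z [^]\<^bsub>W3\<^esub> (0::int) \<or> a = z [^]\<^bsub>W3\<^esub> (1::int) \<or> a = z [^]\<^bsub>W3\<^esub> (-1::int)"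
    using Cons.prems z by (auto simp: W3.int_pow_neg inv_W3)
  then show ?case
    unfolding list_product.simps n using W3.int_pow_mult[OF z, symmetric] by blast
qed

text \<open>Powers of one element commute, while the free generators do not.\<close>
lemma x_not_in_products_of_one_word:
  assumes "reduced z" "T \<subseteq> {[], z, rev z}"
  shows "\<not> (x\<^sub>1 \<in> products T \<and> x\<^sub>2 \<in> products T)"
proof
  assume "x\<^sub>1 \<in> products T \<and> x\<^sub>2 \<in> products T"
  then obtain L M where "set L \<subseteq> T" "x\<^sub>1 = list_product L" "set M \<subseteq> T" "x\<^sub>2 = list_product M"
    by (auto simp: products_def)
  then obtain m n :: int where m: "x\<^sub>1 = z [^]\<^bsub>W3\<^esub> m" and n: "x\<^sub>2 = z [^]\<^bsub>W3\<^esub> n"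
    using list_product_in_powers[OF assms(1)] assms(2) by (metis order_trans)
  have z: "z \<in> carrier W3" using assms(1) by simp
  have "x\<^sub>1 \<cdot> x\<^sub>2 = z [^]\<^bsub>W3\<^esub> (m + n)" unfolding m n by (rule W3.int_pow_mult[OF z, symmetric])
  also have "\<dots> = x\<^sub>2 \<cdot> x\<^sub>1" unfolding m n by (simp add: W3.int_pow_mult[OF z, symmetric] add.commute)
  finally show False by (simp add: x\<^sub>1_def x\<^sub>2_def mult_W3)
qed

fun no_adjacent_inverses :: "gen list list \<Rightarrow> bool" where
  "no_adjacent_inverses (a # b # L) \<longleftrightarrow> b \<noteq> rev a \<and> no_adjacent_inverses (b # L)"
| "no_adjacent_inverses _ \<longleftrightarrow> True"

lemma no_adjacent_inverses_ConsD: "no_adjacent_inverses (a # L) \<Longrightarrow> no_adjacent_inverses L"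
  by (cases L) auto

lemma in_products_no_adjacent_inverses:
  assumes "x \<in> products S" "\<forall>a\<in>S. reduced a \<and> rev a \<in> S"
  shows "\<exists>L. set L \<subseteq> S \<and> no_adjacent_inverses L \<and> list_product L = x"
proof -
  obtain L where "set L \<subseteq> S" "list_product L = x" using assms(1) by (auto simp: products_def)
  moreover have "set L \<subseteq> S \<Longrightarrow> \<exists>L'. set L' \<subseteq> S \<and> no_adjacent_inverses L' \<and> list_product L' = list_product L"
  proof (induction L)
    case (Cons a L)
    then obtain L' where L': "set L' \<subseteq> S" "no_adjacent_inverses L'" "list_product L' = list_product L"
      by auto
    have ra: "reduced a" using Cons.prems assms(2) by auto
    show ?case
    proof (cases "L' \<noteq> [] \<and> hd L' = rev a")
      case True
      then obtain L'' where L'': "L' = rev a # L''" by (cases L') auto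
      have "\<forall>x\<in>set L''. reduced x" using L'(1) L'' assms(2) by auto
      then have "reduced (list_product L'')" by (rule reduced_list_product)
      have "list_product (a # L) = a \<cdot> (inv\<^bsub>W3\<^esub> a \<cdot> list_product L'')"
        using L'(3) L'' inv_W3[OF ra] by simp
      also have "\<dots> = list_product L''"
        using ra \<open>reduced (list_product L'')\<close> by (simp add: W3.m_assoc[symmetric])
      finally have "list_product (a # L) = list_product L''" .
      then show ?thesis using L' L'' no_adjacent_inverses_ConsD by (intro exI[of _ L'']) auto
    next
      case False
      then have "no_adjacent_inverses (a # L')" using L'(2) by (cases L') auto
      then show ?thesis using L' Cons.prems by (intro exI[of _ "a # L'"]) auto
    qed
  qed (intro exI[of _ "[]"], simp)
  ultimately show ?thesis by blast
qed

text \<open>Nielsen's conditions (N1) and (N2): in a product a b with b \<noteq> a\<inverse> at most half of each factor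
  cancels, and in a product a b c with no adjacent inverses some letter of b survives.\<close>
definition nielsen_reduced :: "gen list set \<Rightarrow> bool" where
  "nielsen_reduced S \<longleftrightarrow>
    (\<forall>a\<in>S. \<forall>b\<in>S. b \<noteq> rev a \<longrightarrow> 2 * lcp (rev a) b \<le> length a \<and> 2 * lcp (rev a) b \<le> length b) \<and>
    (\<forall>a\<in>S. \<forall>b\<in>S. \<forall>c\<in>S. b \<noteq> rev a \<longrightarrow> c \<noteq> rev b \<longrightarrow> lcp (rev a) b + lcp (rev b) c < length b)"

lemma nielsen_reducedD:
  assumes "nielsen_reduced S" "a \<in> S" "b \<in> S" "b \<noteq> rev a"
  shows "2 * lcp (rev a) b \<le> length a" "2 * lcp (rev a) b \<le> length b"
    and "c \<in> S \<Longrightarrow> c \<noteq> rev b \<Longrightarrow> lcp (rev a) b + lcp (rev b) c < length b"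
  using assms unfolding nielsen_reduced_def by blast+

definition next_cancellation :: "gen list list \<Rightarrow> nat" where
  "next_cancellation L = (case L of a # b # _ \<Rightarrow> lcp (rev a) b | _ \<Rightarrow> 0)"

text \<open>In a product of a Nielsen-reduced family without adjacent inverses, the part of the first
  factor not cancelled against the second one survives as a prefix.\<close>
lemma nielsen_list_product:
  assumes S: "\<forall>a\<in>S. reduced a \<and> a \<noteq> []" and N: "nielsen_reduced S"
  shows "L \<noteq> [] \<Longrightarrow> set L \<subseteq> S \<Longrightarrow> no_adjacent_inverses L \<Longrightarrow>
    reduced (list_product L) \<and> (\<forall>a\<in>set L. length a \<le> length (list_product L)) \<and>
    length (hd L) - next_cancellation L \<le> length (list_product L) \<and>
    take (length (hd L) - next_cancellation L) (list_product L) =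
      take (length (hd L) - next_cancellation L) (hd L)"
proof (induction L rule: induct_list012)
  case (2 a)
  then show ?case using S by (simp add: next_cancellation_def)
next
  case (3 a b L')
  let ?P = "list_product (b # L')" and ?k = "length b - next_cancellation (b # L')"
  have IH: "reduced ?P \<and> (\<forall>x\<in>set (b # L'). length x \<le> length ?P) \<and> ?k \<le> length ?P \<and>
      take ?k ?P = take ?k b"
    using "3.IH"(2) "3.prems" no_adjacent_inverses_ConsD by auto
  have aS: "a \<in> S" and bS: "b \<in> S" and ba: "b \<noteq> rev a" using "3.prems" by auto
  then have ra: "reduced a" and bne: "b \<noteq> []" using S by auto
  define c where "c = lcp (rev a) b"
  have c2: "2 * c \<le> length a" "2 * c \<le> length b"
    unfolding c_def by (rule nielsen_reducedD[OF N aS bS ba])+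
  have "c < ?k"
  proof (cases L')
    case Nil
    have "length b > 0" using bne by simp
    then have "c < length b" using c2 by linarith
    then show ?thesis using Nil by (simp add: next_cancellation_def)
  next
    case (Cons d L2)
    then have "d \<in> S" "d \<noteq> rev b" using "3.prems" by auto
    then have "c + lcp (rev b) d < length b"
      unfolding c_def by (rule nielsen_reducedD(3)[OF N aS bS ba])
    then show ?thesis using Cons by (simp add: next_cancellation_def)
  qed
  then have "lcp (rev a) ?P = c"
    using lcp_eq_if_take_eq[of ?k b ?P "rev a"] IH by (simp add: c_def)
  then have eq: "list_product (a # b # L') = take (length a - c) a @ drop c ?P"
    using foldr_push_eq_cancel[OF ra] IH by (simp add: mult_W3)
  then have len: "length (list_product (a # b # L')) = length a - c + (length ?P - c)"
    using c2 by simp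
  have next_eq: "next_cancellation (a # b # L') = c" by (simp add: next_cancellation_def c_def)
  show ?case
  proof (intro conjI)
    show "reduced (list_product (a # b # L'))" using IH ra by simp
    show "\<forall>x\<in>set (a # b # L'). length x \<le> length (list_product (a # b # L'))"
      using IH len c2 by auto
  qed (use len next_eq c2 eq in simp_all)
qed simp

lemma in_products_of_shorter:
  assumes S: "\<forall>a\<in>S. reduced a \<and> a \<noteq> [] \<and> rev a \<in> S" and N: "nielsen_reduced S"
    and x: "x \<in> products S"
  shows "x \<in> products {a \<in> S. length a \<le> length x}"
proof -
  obtain L where L: "set L \<subseteq> S" "no_adjacent_inverses L" "list_product L = x"
    using in_products_no_adjacent_inverses[OF x] S by auto
  have "\<forall>a\<in>set L. length a \<le> length x"
  proof (cases "L = []")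
    case False
    have "\<forall>a\<in>S. reduced a \<and> a \<noteq> []" using S by blast
    from nielsen_list_product[OF this N False L(1,2)] show ?thesis using L(3) by blast
  qed simp
  with L(1) have "set L \<subseteq> {a \<in> S. length a \<le> length x}" by auto
  then show ?thesis unfolding products_def using L(3) by (intro CollectI exI[of _ L]) simp
qed

definition inverts :: "('a, 'b) monoid_scheme \<Rightarrow> 'a \<Rightarrow> 'a \<Rightarrow> bool" where
  "inverts G t x \<longleftrightarrow> t \<otimes>\<^bsub>G\<^esub> x \<otimes>\<^bsub>G\<^esub> t = inv\<^bsub>G\<^esub> x"

definition commonly_inverted :: "('a, 'b) monoid_scheme \<Rightarrow> 'a \<Rightarrow> 'a \<Rightarrow> bool" where
  "commonly_inverted G x y \<longleftrightarrow>
    (\<exists>t \<in> carrier G. t \<otimes>\<^bsub>G\<^esub> t = \<one>\<^bsub>G\<^esub> \<and> inverts G t x \<and> inverts G t y)"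

lemma commonly_inverted_sym: "commonly_inverted G x y \<longleftrightarrow> commonly_inverted G y x"
  by (auto simp: commonly_inverted_def)

context group
begin

lemma inverts_inv:
  assumes t: "t \<in> carrier G" "t \<otimes> t = \<one>" and x: "x \<in> carrier G"
  shows "inverts G t (inv x) \<longleftrightarrow> inverts G t x"
proof -
  have "inv t = t" using t inv_equality by blast
  then have eq: "inv (t \<otimes> x \<otimes> t) = t \<otimes> inv x \<otimes> t" using t x by (simp add: inv_mult_group m_assoc)
  have "inverts G t (inv x) \<longleftrightarrow> inv (t \<otimes> x \<otimes> t) = x" using x by (simp add: inverts_def eq)
  also have "\<dots> \<longleftrightarrow> t \<otimes> x \<otimes> t = inv x" using t x by (metis inv_inv m_closed)
  finally show ?thesis by (simp add: inverts_def)
qed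

lemma commonly_inverted_inv:
  assumes "x \<in> carrier G"
  shows "commonly_inverted G (inv x) y \<longleftrightarrow> commonly_inverted G x y"
  using inverts_inv assms by (auto simp: commonly_inverted_def)

lemma inverts_commute:
  assumes t: "t \<in> carrier G" "t \<otimes> t = \<one>" and "y \<in> carrier G" "inverts G t y" "x \<in> carrier G"
  shows "t \<otimes> (y \<otimes> x) = inv y \<otimes> (t \<otimes> x)"
proof -
  have "t \<otimes> (y \<otimes> x) = (t \<otimes> y \<otimes> t) \<otimes> (t \<otimes> x)"
    using assms by (simp add: m_assoc[symmetric]) (simp add: m_assoc)
  then show ?thesis using assms(4) by (simp add: inverts_def)
qed

text \<open>If t inverts b and b a, then t b inverts a and b.\<close>
lemma commonly_inverted_mult_left:
  assumes a: "a \<in> carrier G" and b: "b \<in> carrier G" and "commonly_inverted G (b \<otimes> a) b"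
  shows "commonly_inverted G a b"
proof -
  obtain t where t: "t \<in> carrier G" "t \<otimes> t = \<one>" and "inverts G t (b \<otimes> a)" "inverts G t b"
    using assms(3) by (auto simp: commonly_inverted_def)
  then have tba: "t \<otimes> (b \<otimes> (a \<otimes> t)) = inv a \<otimes> inv b"
    using a b by (simp add: inverts_def m_assoc inv_mult_group)
  have cancel: "u \<otimes> (inv u \<otimes> x) = x" "inv u \<otimes> (u \<otimes> x) = x"
    if "u \<in> carrier G" "x \<in> carrier G" for u x
    using that by (simp_all add: m_assoc[symmetric])
  have tt: "t \<otimes> (t \<otimes> x) = x" if "x \<in> carrier G" for x
    using that t by (simp add: m_assoc[symmetric])
  have tb: "t \<otimes> (b \<otimes> x) = inv b \<otimes> (t \<otimes> x)" if "x \<in> carrier G" for x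
    using inverts_commute[OF t b \<open>inverts G t b\<close> that] .
  have "inv b \<otimes> (t \<otimes> (a \<otimes> t)) = inv a \<otimes> inv b" using tba tb a t by simp
  then have "t \<otimes> (a \<otimes> t) = b \<otimes> (inv a \<otimes> inv b)"
    using cancel[of b "t \<otimes> (a \<otimes> t)"] a b t by simp
  then have tat: "t \<otimes> (a \<otimes> (t \<otimes> x)) = b \<otimes> (inv a \<otimes> (inv b \<otimes> x))" if "x \<in> carrier G" for x
    using that a b t by (simp add: m_assoc[symmetric])
  have "t \<otimes> b \<in> carrier G" "(t \<otimes> b) \<otimes> (t \<otimes> b) = \<one>"
    "(t \<otimes> b) \<otimes> a \<otimes> (t \<otimes> b) = inv a" "(t \<otimes> b) \<otimes> b \<otimes> (t \<otimes> b) = inv b"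
    using a b t by (simp_all add: m_assoc tb tt tat cancel)
  then show ?thesis by (auto simp: commonly_inverted_def inverts_def)
qed

lemma commonly_inverted_mult_right:
  assumes a: "a \<in> carrier G" and b: "b \<in> carrier G" and "commonly_inverted G (a \<otimes> b) b"
  shows "commonly_inverted G a b"
proof -
  have inv_right: "commonly_inverted G x (inv y) \<longleftrightarrow> commonly_inverted G x y" if "y \<in> carrier G" for x y
    using commonly_inverted_inv[OF that] commonly_inverted_sym by metis
  have "commonly_inverted G (inv (a \<otimes> b)) (inv b)"
    using assms(3) commonly_inverted_inv[OF m_closed[OF a b]] inv_right[OF b] by blast
  then have "commonly_inverted G (inv b \<otimes> inv a) (inv b)" by (simp only: inv_mult_group[OF a b])
  then have "commonly_inverted G (inv a) (inv b)"
    by (rule commonly_inverted_mult_left[OF inv_closed[OF a] inv_closed[OF b]])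
  then show ?thesis using commonly_inverted_inv[OF a] inv_right[OF b] by blast
qed

end

lemma even_length_positive:
  assumes "even (length a)" "a \<noteq> []"
  obtains m where "length a = 2 * m" "m > 0"
proof -
  obtain m where m: "length a = 2 * m" using assms(1) by (auto elim: evenE)
  with assms(2) have "m > 0" by (cases m) auto
  with m that show ?thesis by blast
qed

context
  fixes y z :: "gen list"
  assumes y: "y \<in> ker_eps" "y \<noteq> []" and z: "z \<in> ker_eps" "z \<noteq> []"
    and irreducible: "\<And>a b. a \<in> {y, rev y, z, rev z} \<Longrightarrow> b \<in> {y, rev y, z, rev z} \<Longrightarrow>
      a \<noteq> b \<Longrightarrow> a \<noteq> rev b \<Longrightarrow> \<not> nielsen_less (a \<cdot> b) a \<and> \<not> nielsen_less (b \<cdot> a) a"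
begin

private abbreviation (input) "S \<equiv> {y, rev y, z, rev z}"

private lemma S_props: "a \<in> S \<Longrightarrow> reduced a \<and> even (length a) \<and> a \<noteq> []"
  using y z by (auto simp: ker_eps_iff reduced_rev)

lemma nielsen_cancellation_half:
  assumes "a \<in> S" "b \<in> S" "b \<noteq> rev a"
  shows "2 * lcp (rev a) b \<le> length a \<and> 2 * lcp (rev a) b \<le> length b"
proof (cases "a = b")
  case True
  obtain m where m: "length a = 2 * m" "m > 0" using S_props[OF assms(1)] even_length_positive by blast
  then show ?thesis using lcp_rev_self_less[of a m] S_props[OF assms(1)] True by simp
next
  case False
  have "a \<noteq> rev b" using assms(3) by auto
  then have "\<not> nielsen_less (a \<cdot> b) a" "\<not> nielsen_less (a \<cdot> b) b"
    using irreducible[OF assms(1,2) False] irreducible[OF assms(2,1)] False assms(3) by auto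
  then have "length a \<le> length (a \<cdot> b)" "length b \<le> length (a \<cdot> b)"
    by (auto simp: nielsen_less_def)
  then show ?thesis
    using length_foldr_push[of a b] S_props assms(1,2) by (simp add: mult_W3)
qed

lemma nielsen_cancellation_middle:
  assumes a: "a \<in> S" and b: "b \<in> S" and c: "c \<in> S" and "b \<noteq> rev a" "c \<noteq> rev b"
  shows "lcp (rev a) b + lcp (rev b) c < length b"
proof (rule ccontr)
  assume ge: "\<not> ?thesis"
  obtain m where m: "length b = 2 * m" "m > 0" using S_props[OF b] even_length_positive by blast
  have l1: "lcp (rev a) b = m" and l2: "lcp (rev b) c = m"
    using ge nielsen_cancellation_half[OF a b] nielsen_cancellation_half[OF b c] assms(4,5) m
    by linarith+
  have "lcp (rev b) b < m" using lcp_rev_self_less[OF _ m] S_props[OF b] by blast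
  then have "a \<noteq> b" "c \<noteq> b" using l1 l2 by auto
  have "a \<noteq> rev c"
  proof
    assume "a = rev c"
    then have "take m c = take m b" using take_lcp[of "rev a" b] l1 by simp
    moreover have "take m (rev b) = take m c" using take_lcp[of "rev b" c] l2 by simp
    ultimately have "m \<le> lcp (rev b) b" using m by (intro lcp_greatest) auto
    with \<open>lcp (rev b) b < m\<close> show False by simp
  qed
  \<comment> \<open>a and c avoid b and b\<inverse>, and the rest of S is a single pair of mutual inverses\<close>
  then have "a = c" using a b c \<open>a \<noteq> b\<close> \<open>c \<noteq> b\<close> assms(4,5) by auto
  then have "lcp (rev b) a = m" using l2 by simp
  moreover have "2 * m \<le> length a" using nielsen_cancellation_half[OF a b assms(4)] l1 by simp
  ultimately have "nielsen_less (b \<cdot> a) a \<or> nielsen_less (a \<cdot> b) a"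
    using nielsen_less_if_half_cancellation[of a b m] S_props[OF a] S_props[OF b] m l1 by blast
  moreover have "a \<noteq> rev b" using assms(4) by auto
  ultimately show False using irreducible[OF a b \<open>a \<noteq> b\<close>] by blast
qed

lemma nielsen_reduced_if_irreducible: "nielsen_reduced S"
  unfolding nielsen_reduced_def
  by (intro conjI ballI impI nielsen_cancellation_half nielsen_cancellation_middle)

end

definition generates_ker :: "gen list \<Rightarrow> gen list \<Rightarrow> bool" where
  "generates_ker y z \<longleftrightarrow> ker_eps \<subseteq> products {y, rev y, z, rev z}"

lemma generates_ker_if_in_products:
  assumes "reduced c" "reduced d" "generates_ker a b"
    and "a \<in> products {c, rev c, d, rev d}" "rev a \<in> products {c, rev c, d, rev d}"
    and "b \<in> {c, rev c, d, rev d}"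
  shows "generates_ker c d"
proof -
  have reduced: "\<forall>x\<in>{c, rev c, d, rev d}. reduced x" using assms(1,2) by (simp add: reduced_rev)
  then have "b \<in> products {c, rev c, d, rev d}" "rev b \<in> products {c, rev c, d, rev d}"
    using assms(6) by (auto intro!: in_products)
  then have "products {a, rev a, b, rev b} \<subseteq> products {c, rev c, d, rev d}"
    using assms(4,5) by (intro products_mono[OF reduced]) auto
  then show ?thesis using assms(3) by (auto simp: generates_ker_def)
qed

lemma generates_ker_mult_left:
  assumes a: "reduced a" and b: "reduced b" and "generates_ker a b"
  shows "generates_ker (b \<cdot> a) b"
proof (rule generates_ker_if_in_products[OF _ b assms(3)])
  let ?T = "{b \<cdot> a, rev (b \<cdot> a), b, rev b}"
  have reduced: "\<forall>x\<in>?T. reduced x" using a b by (simp add: reduced_rev)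
  have "x \<in> products ?T" if "x \<in> ?T" for x using that reduced by (intro in_products) auto
  then have "rev b \<cdot> (b \<cdot> a) \<in> products ?T" "rev (b \<cdot> a) \<cdot> b \<in> products ?T"
    by (simp_all add: mult_in_products[OF reduced])
  moreover have "rev b \<cdot> (b \<cdot> a) = a" "rev (b \<cdot> a) \<cdot> b = rev a"
    using a b by (simp_all add: W3.m_assoc W3.inv_mult_group reduced_rev flip: inv_W3)
  ultimately show "a \<in> products ?T" "rev a \<in> products ?T" by simp_all
qed (use a b in auto)

lemma generates_ker_mult_right:
  assumes a: "reduced a" and b: "reduced b" and "generates_ker a b"
  shows "generates_ker (a \<cdot> b) b"
proof (rule generates_ker_if_in_products[OF _ b assms(3)])
  let ?T = "{a \<cdot> b, rev (a \<cdot> b), b, rev b}"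
  have reduced: "\<forall>x\<in>?T. reduced x" using a b by (simp add: reduced_rev)
  have "x \<in> products ?T" if "x \<in> ?T" for x using that reduced by (intro in_products) auto
  then have "(a \<cdot> b) \<cdot> rev b \<in> products ?T" "b \<cdot> rev (a \<cdot> b) \<in> products ?T"
    by (simp_all add: mult_in_products[OF reduced])
  moreover have "(a \<cdot> b) \<cdot> rev b = a" "b \<cdot> rev (a \<cdot> b) = rev a"
    using a b by (simp_all add: W3.m_assoc W3.inv_mult_group reduced_rev flip: inv_W3)
  ultimately show "a \<in> products ?T" "rev a \<in> products ?T" by simp_all
qed (use a b in auto)

lemma commonly_inverted_rev:
  assumes "reduced x"
  shows "commonly_inverted W3 (rev x) w \<longleftrightarrow> commonly_inverted W3 x w"
    and "commonly_inverted W3 w (rev x) \<longleftrightarrow> commonly_inverted W3 w x"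
proof -
  have x: "x \<in> carrier W3" and inv: "inv\<^bsub>W3\<^esub> x = rev x" using assms by (simp_all add: inv_W3)
  show rev_left: "commonly_inverted W3 (rev x) w \<longleftrightarrow> commonly_inverted W3 x w" for w
    using W3.commonly_inverted_inv[OF x, of w] by (simp only: inv)
  show "commonly_inverted W3 w (rev x) \<longleftrightarrow> commonly_inverted W3 w x"
    using rev_left[of w] commonly_inverted_sym[of W3 w] by blast
qed

lemma pair_in_symmetric_pair:
  assumes "reduced y" "reduced z" "a \<in> {y, rev y, z, rev z}" "b \<in> {y, rev y, z, rev z}"
    "a \<noteq> b" "a \<noteq> rev b"
  shows "{a, rev a, b, rev b} = {y, rev y, z, rev z}"
    and "length a + length b = length y + length z"
    and "half_rank a + half_rank b = half_rank y + half_rank z"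
    and "commonly_inverted W3 a b \<longleftrightarrow> commonly_inverted W3 y z"
proof -
  have "(a = y \<or> a = rev y) \<and> (b = z \<or> b = rev z) \<or> (a = z \<or> a = rev z) \<and> (b = y \<or> b = rev y)"
    using assms(3-6) by auto
  then show "{a, rev a, b, rev b} = {y, rev y, z, rev z}"
    and "length a + length b = length y + length z"
    and "half_rank a + half_rank b = half_rank y + half_rank z"
    and "commonly_inverted W3 a b \<longleftrightarrow> commonly_inverted W3 y z"
    by (elim disjE conjE; simp add: insert_commute half_rank_rev commonly_inverted_rev assms(1,2)
        commonly_inverted_sym[of W3 z])+
qed

lemma commonly_inverted_length_two:
  assumes "reduced y" "length y = 2" "reduced z" "length z = 2"
  shows "commonly_inverted W3 y z"
proof -
  obtain a1 a2 c1 c2 where y: "y = [a1, a2]" and z: "z = [c1, c2]"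
    using assms(2,4) by (cases y; cases "tl y"; cases z; cases "tl z") auto
  then have "a1 \<noteq> a2" "c1 \<noteq> c2" using assms(1,3) by auto
  then obtain e where e: "e \<in> {a1, a2}" "e \<in> {c1, c2}"
    by (cases a1; cases a2; cases c1; cases c2) auto
  have "inverts W3 [e] [a, b]" if "a \<noteq> b" "e \<in> {a, b}" for a b
    using that by (cases a; cases b; cases e) (auto simp: inverts_def mult_W3 inv_W3)
  then show ?thesis
    using e \<open>a1 \<noteq> a2\<close> \<open>c1 \<noteq> c2\<close> unfolding commonly_inverted_def y z
    by (intro bexI[of _ "[e]"]) auto
qed

lemma length_le_two_if_short_generators:
  assumes "reduced z" "x\<^sub>1 \<in> products T" "x\<^sub>2 \<in> products T"
    and "T \<subseteq> {a \<in> {y, rev y, z, rev z}. length a \<le> 2}"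
  shows "length y \<le> 2"
proof (rule ccontr)
  assume "\<not> length y \<le> 2"
  with assms(4) have "T \<subseteq> {[], z, rev z}" by auto
  with x_not_in_products_of_one_word[OF assms(1)] assms(2,3) show False by blast
qed

lemma generates_ker_nonempty:
  assumes "reduced y" "reduced z" "generates_ker y z"
  shows "y \<noteq> []" "z \<noteq> []"
proof -
  have x_in: "x\<^sub>1 \<in> products {y, rev y, z, rev z}" "x\<^sub>2 \<in> products {y, rev y, z, rev z}"
    using assms(3) by (auto simp: generates_ker_def)
  show "y \<noteq> []"
  proof
    assume "y = []"
    then have "{y, rev y, z, rev z} \<subseteq> {[], z, rev z}" by auto
    then show False using x_not_in_products_of_one_word[OF assms(2)] x_in by blast
  qed
  show "z \<noteq> []"
  proof
    assume "z = []"
    then have "{y, rev y, z, rev z} \<subseteq> {[], y, rev y}" by auto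
    then show False using x_not_in_products_of_one_word[OF assms(1)] x_in by blast
  qed
qed

lemma commonly_inverted_if_nielsen_reduced:
  assumes "y \<in> ker_eps" "z \<in> ker_eps" "generates_ker y z" and N: "nielsen_reduced {y, rev y, z, rev z}"
  shows "commonly_inverted W3 y z"
proof -
  let ?S = "{y, rev y, z, rev z}"
  have ry: "reduced y" "even (length y)" and rz: "reduced z" "even (length z)"
    using assms(1,2) by (simp_all add: ker_eps_iff)
  note nonempty = generates_ker_nonempty[OF ry(1) rz(1) assms(3)]
  have S: "\<forall>a\<in>?S. reduced a \<and> a \<noteq> [] \<and> rev a \<in> ?S"
    using ry rz nonempty by (auto simp: reduced_rev)
  have "x \<in> products {a \<in> ?S. length a \<le> 2}" if "x \<in> products ?S" "length x = 2" for x
    using in_products_of_shorter[OF S N that(1)] that(2) by simp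
  moreover have "x\<^sub>1 \<in> products ?S" "x\<^sub>2 \<in> products ?S"
    using assms(3) by (auto simp: generates_ker_def)
  ultimately have short: "x\<^sub>1 \<in> products {a \<in> ?S. length a \<le> 2}" "x\<^sub>2 \<in> products {a \<in> ?S. length a \<le> 2}"
    by (simp_all add: x\<^sub>1_def x\<^sub>2_def)
  have "length y \<le> 2" using length_le_two_if_short_generators[OF rz(1) short] by blast
  moreover have "length z \<le> 2"
    using length_le_two_if_short_generators[OF ry(1) short, of z] by auto
  moreover have "length y \<noteq> 0" "length z \<noteq> 0" using nonempty by simp_all
  ultimately have "length y = 2" "length z = 2" using ry(2) rz(2) by presburger+
  then show ?thesis using commonly_inverted_length_two ry(1) rz(1) by blast
qed

lemma commonly_inverted_if_move:
  assumes ker: "a \<in> ker_eps" "b \<in> ker_eps" and "generates_ker a b"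
    and move: "nielsen_less (a \<cdot> b) a \<or> nielsen_less (b \<cdot> a) a"
    and smaller: "\<And>c. nielsen_less c a \<Longrightarrow> c \<in> ker_eps \<Longrightarrow> generates_ker c b \<Longrightarrow>
      commonly_inverted W3 c b"
  shows "commonly_inverted W3 a b"
proof -
  have reduced: "reduced a" "reduced b" using ker by (simp_all add: ker_eps_iff)
  from move show ?thesis
  proof
    assume "nielsen_less (a \<cdot> b) a"
    then have "commonly_inverted W3 (a \<cdot> b) b"
      using smaller mult_closed_ker_eps[OF ker] generates_ker_mult_right[OF reduced assms(3)] by blast
    then show ?thesis using W3.commonly_inverted_mult_right reduced by simp
  next
    assume "nielsen_less (b \<cdot> a) a"
    then have "commonly_inverted W3 (b \<cdot> a) b"
      using smaller mult_closed_ker_eps[OF ker(2,1)] generates_ker_mult_left[OF reduced assms(3)] by blast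
    then show ?thesis using W3.commonly_inverted_mult_left reduced by simp
  qed
qed

text \<open>Nielsen reduction: while some elementary move lowers the complexity of the generating pair,
  apply it; a pair on which no move helps is Nielsen reduced.\<close>
lemma commonly_inverted_if_generates_ker:
  assumes "y \<in> ker_eps" "z \<in> ker_eps" "generates_ker y z"
  shows "commonly_inverted W3 y z"
  using assms
proof (induction "(y, z)" arbitrary: y z rule: wf_induct_rule[OF wf_measures[of
      "[\<lambda>(y, z). length y + length z, \<lambda>(y, z). half_rank y + half_rank z]"], case_names less])
  case (less y z)
  let ?S = "{y, rev y, z, rev z}"
  have ry: "reduced y" and rz: "reduced z" using less.prems(1,2) by (simp_all add: ker_eps_iff)
  show ?case
  proof (cases "\<exists>a\<in>?S. \<exists>b\<in>?S. a \<noteq> b \<and> a \<noteq> rev b \<and> (nielsen_less (a \<cdot> b) a \<or> nielsen_less (b \<cdot> a) a)")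
    case True
    then obtain a b where ab: "a \<in> ?S" "b \<in> ?S" "a \<noteq> b" "a \<noteq> rev b"
      and move: "nielsen_less (a \<cdot> b) a \<or> nielsen_less (b \<cdot> a) a"
      by blast
    note pair = pair_in_symmetric_pair[OF ry rz ab]
    have ker: "a \<in> ker_eps" "b \<in> ker_eps"
      using ab less.prems(1,2) by (auto simp: ker_eps_iff reduced_rev)
    have "generates_ker a b" using less.prems(3) pair(1) by (simp add: generates_ker_def)
    have IH: "commonly_inverted W3 c b"
      if "nielsen_less c a" "c \<in> ker_eps" "generates_ker c b" for c
    proof -
      have "((c, b), (y, z)) \<in> measures
          [\<lambda>(y, z). length y + length z, \<lambda>(y, z). half_rank y + half_rank z]"
        using that(1) pair(2,3) by (auto simp: nielsen_less_def)
      then show ?thesis using less.hyps[of c b] that(2,3) ker(2) by blast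
    qed
    then show ?thesis
      using commonly_inverted_if_move[OF ker \<open>generates_ker a b\<close> move] pair(4) by simp
  next
    case False
    then have "nielsen_reduced ?S"
      using nielsen_reduced_if_irreducible[of y z] less.prems generates_ker_nonempty[OF ry rz]
      by blast
    then show ?thesis using commonly_inverted_if_nielsen_reduced less.prems by blast
  qed
qed

section \<open>Surjectivity\<close>

lemma generates_ker_x: "generates_ker x\<^sub>1 x\<^sub>2"
  unfolding generates_ker_def
proof
  fix k assume "k \<in> ker_eps"
  then show "k \<in> products {x\<^sub>1, rev x\<^sub>1, x\<^sub>2, rev x\<^sub>2}"
  proof (induction rule: ker_eps_induct)
    case Nil
    show ?case by (rule Nil_in_products)
  next
    case (Cons2 a b k)
    let ?X = "{x\<^sub>1, rev x\<^sub>1, x\<^sub>2, rev x\<^sub>2}"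
    have reduced: "\<forall>x\<in>?X. reduced x" by (simp add: x\<^sub>1_def x\<^sub>2_def)
    have "x \<in> products ?X" if "x \<in> ?X" for x using that reduced by (intro in_products) auto
    then have "[a, b] \<in> products ?X"
      using two_letter_word_cases[OF Cons2(1)] mult_in_products[OF reduced]
      by (auto simp: inv_W3 x\<^sub>1_def x\<^sub>2_def)
    then show ?case using Cons2(3) mult_in_products[OF reduced] by blast
  qed
qed

context K_automorphism
begin

lemma image_list_product:
  "set L \<subseteq> ker_eps \<Longrightarrow> list_product L \<in> ker_eps \<and> \<alpha> (list_product L) = list_product (map \<alpha> L)"
proof (induction L)
  case Nil
  then show ?case using image_Nil by (simp add: ker_eps_iff)
next
  case (Cons a L)
  then show ?case using image_mult mult_closed_ker_eps by simp
qed

lemma generates_ker_image: "generates_ker (\<alpha> x\<^sub>1) (\<alpha> x\<^sub>2)"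
  unfolding generates_ker_def
proof
  fix k assume "k \<in> ker_eps"
  then obtain l where l: "l \<in> ker_eps" "\<alpha> l = k" using surj by blast
  then obtain L where L: "set L \<subseteq> {x\<^sub>1, rev x\<^sub>1, x\<^sub>2, rev x\<^sub>2}" "list_product L = l"
    using generates_ker_x by (auto simp: generates_ker_def products_def)
  have rev_x: "rev x\<^sub>1 = inv\<^bsub>W3\<^esub> x\<^sub>1" "rev x\<^sub>2 = inv\<^bsub>W3\<^esub> x\<^sub>2" by (simp_all add: inv_W3 x\<^sub>1_def x\<^sub>2_def)
  have "set L \<subseteq> ker_eps" using L(1) inv_closed_ker_eps by (auto simp: rev_x)
  then have "k = list_product (map \<alpha> L)" using image_list_product L(2) l(2) by blast
  moreover have "set (map \<alpha> L) \<subseteq> {\<alpha> x\<^sub>1, rev (\<alpha> x\<^sub>1), \<alpha> x\<^sub>2, rev (\<alpha> x\<^sub>2)}"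
    using L(1) image_inv reduced_image by (auto simp: rev_x inv_W3)
  ultimately show "k \<in> products {\<alpha> x\<^sub>1, rev (\<alpha> x\<^sub>1), \<alpha> x\<^sub>2, rev (\<alpha> x\<^sub>2)}"
    unfolding products_def by blast
qed

end

theorem lemma2p3:
  shows "iota \<in> iso (AutoGroup W3) (AutoGroup (W3\<lparr>carrier := ker_eps\<rparr>))"
proof -
  have "iota ` auto W3 = auto K"
  proof
    show "iota ` auto W3 \<subseteq> auto K"
      using W3_automorphism.iota_auto by (auto simp: W3_automorphism_def)
    show "auto K \<subseteq> iota ` auto W3"
    proof
      fix \<alpha> assume "\<alpha> \<in> auto K"
      then interpret K_automorphism \<alpha> by unfold_locales
      obtain t where "t \<in> carrier W3" "t \<cdot> t = \<one>\<^bsub>W3\<^esub>" "inverts W3 t (\<alpha> x\<^sub>1)" "inverts W3 t (\<alpha> x\<^sub>2)"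
        using commonly_inverted_if_generates_ker[OF closed closed generates_ker_image]
        by (auto simp: commonly_inverted_def)
      then interpret K_automorphism_with_inverter \<alpha> t by unfold_locales (auto simp: inverts_def)
      show "\<alpha> \<in> iota ` auto W3" using extension_auto iota_extension by (metis image_eqI)
    qed
  qed
  then have "bij_betw iota (auto W3) (auto K)" using inj_on_iota by (simp add: bij_betw_def)
  then show ?thesis using iota_hom by (simp add: iso_def AutoGroup_def BijGroup_def)
qed

end
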